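(* Let $X$ be a nonempty shift space over a finite alphabet. Then: (1) $X$ is boundedly supermultiplicative if and only if there exist constants $c_1,c_2>0$ such that for every $n\ge1$, $$c_1\le\frac{2^{n h(X)}}{|\mathcal{B}_n(X)|}\le c_2.$$ Consequently, if $X$ is boundedly supermultiplicative, a probability measure on $X$ is a Gibbs state if and only if it is a Gibbs-like state. (2) If $X$ admits a Gibbs state, then $X$ is boundedly supermultiplicative; in particular, every Gibbs state on $X$ is a Gibbs-like state.
   Context: $\mathcal{B}_n(X)$ is the set of words of length $n$ appearing in points of $X$, $\mathcal{B}(X)=\bigcup_n\mathcal{B}_n(X)$, and $h(X)=\lim_{n}\frac1n\log|\mathcal{B}_n(X)|$ with $\log$ to base $2$. $X$ is boundedly supermultiplicative if there is $K\ge1$ with $|\mathcal{B}_m(X)|\cdot|\mathcal{B}_n(X)|\le K|\mathcal{B}_{m+n}(X)|$ for all $m,n\ge1$. For a word $\omega$, $[\omega]$ denotes the cylinder set of points of $X$ having $\omega$ at a fixed position. A (Borel) probability measure $\mu$ on $X$ is a Gibbs-like state if there exist $c_1,c_2>0$ such that for all $\omega\in\mathcal{B}(X)$ of length $r$, $c_1\le\mu([\omega])\,|\mathcal{B}_r(X)|\le c_2$; it is a Gibbs state if there exist $c_1,c_2>0$ such that for all $\omega\in\mathcal{B}(X)$ of length $r$, $c_1\le\mu([\omega])\,2^{r h(X)}\le c_2$. *)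

theory Defs
  imports "HOL-Probability.Probability"
begin

definition occurs_in :: "'a list \<Rightarrow> (int \<Rightarrow> 'a) \<Rightarrow> bool" where
  "occurs_in w x \<longleftrightarrow> (\<exists>i::int. w = map (\<lambda>k. x (i + int k)) [0..<length w])"

definition shift_space :: "(int \<Rightarrow> 'a::finite) set \<Rightarrow> bool" where
  "shift_space X \<longleftrightarrow> (\<exists>F :: 'a list set. X = {x. \<forall>w\<in>F. \<not> occurs_in w x})"

definition blocks :: "(int \<Rightarrow> 'a) set \<Rightarrow> nat \<Rightarrow> 'a list set" where
  "blocks X n = {w. length w = n \<and> (\<exists>x\<in>X. occurs_in w x)}"

definition language :: "(int \<Rightarrow> 'a) set \<Rightarrow> 'a list set" where
  "language X = (\<Union>n\<in>{1..}. blocks X n)"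

definition entropy :: "(int \<Rightarrow> 'a) set \<Rightarrow> real" where
  "entropy X = lim (\<lambda>n. log 2 (real (card (blocks X n))) / real n)"

definition bounded_supermult :: "(int \<Rightarrow> 'a) set \<Rightarrow> bool" where
  "bounded_supermult X \<longleftrightarrow> (\<exists>K::real. K \<ge> 1 \<and>
     (\<forall>m n. m \<ge> 1 \<longrightarrow> n \<ge> 1 \<longrightarrow>
        real (card (blocks X m)) * real (card (blocks X n)) \<le> K * real (card (blocks X (m + n)))))"

definition cyl :: "(int \<Rightarrow> 'a) set \<Rightarrow> 'a list \<Rightarrow> (int \<Rightarrow> 'a) set" where
  "cyl X w = {x\<in>X. \<forall>k<length w. x (int k) = w ! k}"

(* Borel probability measure on X: the Borel sigma-algebra of the product
   topology (discrete alphabet) is generated by the cylinders. *)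
definition prob_measure_on :: "(int \<Rightarrow> 'a) set \<Rightarrow> (int \<Rightarrow> 'a) measure \<Rightarrow> bool" where
  "prob_measure_on X \<mu> \<longleftrightarrow> prob_space \<mu> \<and> space \<mu> = X \<and>
     sets \<mu> = sigma_sets X (range (cyl X))"

definition gibbs_like :: "(int \<Rightarrow> 'a) set \<Rightarrow> (int \<Rightarrow> 'a) measure \<Rightarrow> bool" where
  "gibbs_like X \<mu> \<longleftrightarrow> prob_measure_on X \<mu> \<and> (\<exists>c1 c2::real. c1 > 0 \<and> c2 > 0 \<and>
     (\<forall>w\<in>language X. c1 \<le> measure \<mu> (cyl X w) * real (card (blocks X (length w)))
        \<and> measure \<mu> (cyl X w) * real (card (blocks X (length w))) \<le> c2))"

definition gibbs :: "(int \<Rightarrow> 'a) set \<Rightarrow> (int \<Rightarrow> 'a) measure \<Rightarrow> bool" where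
  "gibbs X \<mu> \<longleftrightarrow> prob_measure_on X \<mu> \<and> (\<exists>c1 c2::real. c1 > 0 \<and> c2 > 0 \<and>
     (\<forall>w\<in>language X. c1 \<le> measure \<mu> (cyl X w) * 2 powr (real (length w) * entropy X)
        \<and> measure \<mu> (cyl X w) * 2 powr (real (length w) * entropy X) \<le> c2))"

end

theory Submission
  imports Defs
begin

(* With s n = log |B_n(X)|, splitting words gives s (m + n) <= s m + s n, and bounded
   supermultiplicativity gives the reverse inequality up to the constant log K. Comparing
   s (m n) with both m s n and n s m traps every s n / n within log K / n of its limit h(X),
   so |B_n(X)| / K <= 2^(n h(X)) <= |B_n(X)|. Conversely 2^(n h(X)) is exactly
   multiplicative, so two-sided bounds of this kind make |B_n(X)| supermultiplicative.
   Since the cylinders of the words of length n partition X, a Gibbs state forces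
   1 = sum over |w| = n of mu [w] to be comparable to |B_n(X)| 2^(-n h(X)); and once
   2^(n h(X)) and |B_n(X)| are comparable, the Gibbs and Gibbs-like conditions differ only
   by bounded factors. *)

lemma occurs_in_iff_nth:
  "occurs_in w x \<longleftrightarrow> (\<exists>i::int. \<forall>k<length w. w ! k = x (i + int k))"
  unfolding occurs_in_def
proof (intro iffI; elim exE)
  fix i assume w: "w = map (\<lambda>k. x (i + int k)) [0..<length w]"
  have "w ! k = x (i + int k)" if "k < length w" for k
  proof -
    have "w ! k = map (\<lambda>k. x (i + int k)) [0..<length w] ! k" using w by (rule arg_cong)
    then show ?thesis using that by simp
  qed
  then have "\<forall>k<length w. w ! k = x (i + int k)" by blast
  then show "\<exists>i. \<forall>k<length w. w ! k = x (i + int k)" ..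
next
  fix i assume "\<forall>k<length w. w ! k = x (i + int k)"
  then have "w = map (\<lambda>k. x (i + int k)) [0..<length w]" by (auto intro: nth_equalityI)
  then show "\<exists>i. w = map (\<lambda>k. x (i + int k)) [0..<length w]" ..
qed

lemma occurs_in_take: "occurs_in w x \<Longrightarrow> occurs_in (take m w) x"
  unfolding occurs_in_iff_nth by auto

lemma occurs_in_drop: "occurs_in w x \<Longrightarrow> occurs_in (drop m w) x"
proof -
  assume "occurs_in w x"
  then obtain i where i: "\<forall>k<length w. w ! k = x (i + int k)"
    unfolding occurs_in_iff_nth by blast
  have "\<forall>k<length (drop m w). drop m w ! k = x ((i + int m) + int k)"
    using i by (simp add: add.assoc)
  then show ?thesis unfolding occurs_in_iff_nth by blast
qed

lemma prefix_in_blocks: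
  assumes "x \<in> X"
  shows "map (\<lambda>k. x (int k)) [0..<n] \<in> blocks X n"
proof -
  have "occurs_in (map (\<lambda>k. x (int k)) [0..<n]) x"
    unfolding occurs_in_def by (rule exI[of _ 0]) simp
  then show ?thesis using assms unfolding blocks_def by auto
qed

lemma finite_blocks: "finite (blocks (X :: (int \<Rightarrow> 'a::finite) set) n)"
  by (rule finite_subset[OF _ finite_lists_length_eq[of UNIV n]]) (auto simp: blocks_def)

lemma card_blocks_pos:
  assumes "X \<noteq> {}"
  shows "0 < card (blocks (X :: (int \<Rightarrow> 'a::finite) set) n)"
proof -
  obtain x where "x \<in> X" using assms by blast
  then have "blocks X n \<noteq> {}" using prefix_in_blocks by blast
  then show ?thesis by (simp add: card_gt_0_iff finite_blocks)
qed

lemma card_blocks_add_le: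
  "card (blocks (X :: (int \<Rightarrow> 'a::finite) set) (m + n))
     \<le> card (blocks X m) * card (blocks X n)"
proof -
  have "blocks X (m + n) \<subseteq> (\<lambda>(u, v). u @ v) ` (blocks X m \<times> blocks X n)"
  proof
    fix w assume "w \<in> blocks X (m + n)"
    then have "take m w \<in> blocks X m" "drop m w \<in> blocks X n"
      by (auto simp: blocks_def intro: occurs_in_take occurs_in_drop)
    moreover have "w = (\<lambda>(u, v). u @ v) (take m w, drop m w)" by simp
    ultimately show "w \<in> (\<lambda>(u, v). u @ v) ` (blocks X m \<times> blocks X n)"
      by blast
  qed
  then have "card (blocks X (m + n))
      \<le> card ((\<lambda>(u, v). u @ v) ` (blocks X m \<times> blocks X n))"
    by (intro card_mono finite_imageI) (simp_all add: finite_blocks)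
  also have "\<dots> \<le> card (blocks X m \<times> blocks X n)"
    by (rule card_image_le) (simp add: finite_blocks)
  finally show ?thesis by (simp add: card_cartesian_product)
qed

definition almost_additive :: "(nat \<Rightarrow> real) \<Rightarrow> real \<Rightarrow> bool" where
  "almost_additive s L \<longleftrightarrow>
     (\<forall>m\<ge>1. \<forall>n\<ge>1. s (m + n) \<le> s m + s n \<and> s m + s n \<le> s (m + n) + L)"

lemma almost_additive_nonneg_const: "almost_additive s L \<Longrightarrow> 0 \<le> L"
  unfolding almost_additive_def by fastforce

lemma almost_additive_multiple_bounds:
  assumes s: "almost_additive s L" and n: "1 \<le> n" and q: "1 \<le> q"
  shows "q * (s n - L) + L \<le> s (q * n)" and "s (q * n) \<le> q * s n"
proof -
  from q have "q * (s n - L) + L \<le> s (q * n) \<and> s (q * n) \<le> q * s n"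
  proof (induction q rule: nat_induct_at_least)
    case (Suc q)
    have "1 \<le> q * n" using Suc.hyps n by simp
    then have "s n + s (q * n) - L \<le> s (n + q * n) \<and> s (n + q * n) \<le> s n + s (q * n)"
      using s n unfolding almost_additive_def by fastforce
    then show ?case using Suc.IH by (simp add: algebra_simps)
  qed simp
  then show "q * (s n - L) + L \<le> s (q * n)" and "s (q * n) \<le> q * s n" by simp_all
qed

lemma almost_additive_quotient_le:
  assumes s: "almost_additive s L" and m: "1 \<le> m" and n: "1 \<le> n"
  shows "s m / m - L / m \<le> s n / n"
proof -
  have "n * (s m - L) \<le> s (n * m)"
    using almost_additive_multiple_bounds(1)[OF s m n] almost_additive_nonneg_const[OF s] by simp
  also have "\<dots> \<le> m * s n"
    using almost_additive_multiple_bounds(2)[OF s n m] by (simp add: mult.commute)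
  finally have "n * (s m - L) \<le> m * s n" .
  then show ?thesis using m n by (simp add: field_simps)
qed

lemma almost_additive_quotient_limit:
  assumes s: "almost_additive s L" and n: "1 \<le> n"
  shows "s n / n - L / n \<le> lim (\<lambda>n. s n / n)" and "lim (\<lambda>n. s n / n) \<le> s n / n"
proof -
  define a where "a = (\<lambda>n. s n / real n)"
  have close: "a m - L / m \<le> a n" if "1 \<le> m" "1 \<le> n" for m n
    using almost_additive_quotient_le[OF s that] unfolding a_def .
  have L: "0 \<le> L" using almost_additive_nonneg_const[OF s] .
  have "Cauchy a"
  proof (rule metric_CauchyI)
    fix e :: real assume "0 < e"
    obtain N0 :: nat where "L / e < N0" using reals_Archimedean2 by blast
    define N where "N = Suc N0"
    have N: "1 \<le> N" "L / N < e"
      using \<open>L / e < N0\<close> \<open>0 < e\<close> by (simp_all add: N_def field_simps)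
    have "dist (a m) (a k) < e" if "N \<le> m" "N \<le> k" for m k
    proof -
      have "L / m \<le> L / N" "L / k \<le> L / N"
        using that N(1) L by (simp_all add: frac_le)
      then show ?thesis
        using close[of m k] close[of k m] that N unfolding dist_real_def by linarith
    qed
    then show "\<exists>N. \<forall>m\<ge>N. \<forall>k\<ge>N. dist (a m) (a k) < e" by blast
  qed
  then have conv: "a \<longlonglongrightarrow> lim a" by (simp add: Cauchy_convergent_iff convergent_LIMSEQ_iff)
  have "a n - L / n \<le> lim a"
    using close[OF n] by (intro LIMSEQ_le_const[OF conv] exI[of _ 1]) simp
  then show "s n / n - L / n \<le> lim (\<lambda>n. s n / n)" unfolding a_def by simp
  have "lim a \<le> a n + 0"
  proof (rule LIMSEQ_le[OF conv])
    show "(\<lambda>m. a n + L / real m) \<longlonglongrightarrow> a n + 0"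
      by (intro tendsto_add tendsto_const lim_const_over_n)
    show "\<exists>N. \<forall>m\<ge>N. a m \<le> a n + L / real m"
      using close[OF _ n] by (intro exI[of _ 1]) (simp add: algebra_simps)
  qed
  then show "lim (\<lambda>n. s n / n) \<le> s n / n" unfolding a_def by simp
qed

definition entropy_comparable :: "(int \<Rightarrow> 'a) set \<Rightarrow> bool" where
  "entropy_comparable X \<longleftrightarrow> (\<exists>c1 c2::real. c1 > 0 \<and> c2 > 0 \<and>
     (\<forall>n\<ge>1. c1 * real (card (blocks X n)) \<le> 2 powr (n * entropy X) \<and>
             2 powr (n * entropy X) \<le> c2 * real (card (blocks X n))))"

lemma entropy_comparable_iff_ratio_bounded:
  assumes "X \<noteq> {}"
  shows "entropy_comparable (X :: (int \<Rightarrow> 'a::finite) set) \<longleftrightarrow>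
    (\<exists>c1 c2::real. c1 > 0 \<and> c2 > 0 \<and> (\<forall>n::nat. n \<ge> 1 \<longrightarrow>
       c1 \<le> 2 powr (real n * entropy X) / real (card (blocks X n)) \<and>
       2 powr (real n * entropy X) / real (card (blocks X n)) \<le> c2))"
proof -
  have "0 < real (card (blocks X n))" for n using card_blocks_pos[OF assms] by simp
  then show ?thesis unfolding entropy_comparable_def by (simp add: le_divide_eq divide_le_eq)
qed

lemma bounded_supermult_imp_entropy_comparable:
  assumes ne: "X \<noteq> {}" and bsm: "bounded_supermult (X :: (int \<Rightarrow> 'a::finite) set)"
  shows "entropy_comparable X"
proof -
  obtain K :: real where K: "1 \<le> K" and supermult: "\<And>m n. 1 \<le> m \<Longrightarrow> 1 \<le> n \<Longrightarrow>
      real (card (blocks X m)) * real (card (blocks X n)) \<le> K * real (card (blocks X (m + n)))"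
    using bsm unfolding bounded_supermult_def by auto
  define B where "B n = real (card (blocks X n))" for n
  define s where "s n = log 2 (B n)" for n
  have pos: "0 < B n" for n using card_blocks_pos[OF ne] unfolding B_def by simp
  have log_mult_B: "log 2 (B m * B n) = s m + s n" for m n
    unfolding s_def using pos[of m] pos[of n] by (simp add: log_mult)
  have sub: "s (m + n) \<le> s m + s n" for m n
  proof -
    have "B (m + n) \<le> B m * B n"
      unfolding B_def by (metis card_blocks_add_le of_nat_le_iff of_nat_mult)
    then have "s (m + n) \<le> log 2 (B m * B n)" unfolding s_def using pos by simp
    then show ?thesis by (simp only: log_mult_B)
  qed
  have sup: "s m + s n \<le> s (m + n) + log 2 K" if "1 \<le> m" "1 \<le> n" for m n
  proof -
    have "log 2 (B m * B n) \<le> log 2 (K * B (m + n))"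
      using supermult[OF that] pos K unfolding B_def by simp
    then show ?thesis unfolding log_mult_B s_def using pos[of "m + n"] K by (simp add: log_mult)
  qed
  have s_almost_additive: "almost_additive s (log 2 K)"
    using sub sup unfolding almost_additive_def by blast
  have "2 powr (n * entropy X) \<le> B n \<and> 1 / K * B n \<le> 2 powr (n * entropy X)"
    if n: "1 \<le> n" for n :: nat
  proof -
    have h: "entropy X = lim (\<lambda>n. s n / n)" unfolding entropy_def s_def B_def ..
    have "s n - log 2 K \<le> n * entropy X" and "n * entropy X \<le> s n"
      using almost_additive_quotient_limit[OF s_almost_additive n] n
      unfolding h by (simp_all add: field_simps)
    then have "2 powr (s n - log 2 K) \<le> 2 powr (n * entropy X)"
      and "2 powr (n * entropy X) \<le> 2 powr (s n)" by simp_all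
    moreover have "2 powr (s n) = B n" unfolding s_def using pos by simp
    moreover have "2 powr (s n - log 2 K) = B n / K"
      unfolding s_def using pos K by (simp add: powr_diff)
    ultimately show ?thesis by simp
  qed
  then show ?thesis unfolding entropy_comparable_def B_def
    using K by (intro exI[of _ "1 / K"] exI[of _ 1]) auto
qed

lemma entropy_comparable_imp_bounded_supermult:
  assumes "entropy_comparable X"
  shows "bounded_supermult X"
proof -
  obtain c1 c2 :: real where c: "0 < c1" "0 < c2" and bounds: "\<And>n. 1 \<le> n \<Longrightarrow>
      c1 * real (card (blocks X n)) \<le> 2 powr (n * entropy X) \<and>
      2 powr (n * entropy X) \<le> c2 * real (card (blocks X n))"
    using assms unfolding entropy_comparable_def by auto
  define B where "B n = real (card (blocks X n))" for n
  have "B m * B n \<le> max 1 (c2 / c1\<^sup>2) * B (m + n)" if m: "1 \<le> m" and n: "1 \<le> n" for m n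
  proof -
    have "c1\<^sup>2 * (B m * B n) = (c1 * B m) * (c1 * B n)" by (simp add: power2_eq_square)
    also have "\<dots> \<le> 2 powr (m * entropy X) * 2 powr (n * entropy X)"
      using bounds[OF m] bounds[OF n] c unfolding B_def by (intro mult_mono) simp_all
    also have "\<dots> = 2 powr ((m + n) * entropy X)" by (simp add: powr_add distrib_right)
    also have "\<dots> \<le> c2 * B (m + n)" using bounds[of "m + n"] m unfolding B_def by simp
    finally have "B m * B n \<le> c2 / c1\<^sup>2 * B (m + n)" using c by (simp add: field_simps)
    also have "\<dots> \<le> max 1 (c2 / c1\<^sup>2) * B (m + n)"
      unfolding B_def by (intro mult_right_mono) simp_all
    finally show ?thesis .
  qed
  then show ?thesis unfolding bounded_supermult_def B_def
    by (intro exI[of _ "max 1 (c2 / c1\<^sup>2)"]) auto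
qed

lemma sum_measure_cyl_blocks:
  assumes "prob_measure_on X \<mu>"
  shows "(\<Sum>w\<in>blocks (X :: (int \<Rightarrow> 'a::finite) set) n. measure \<mu> (cyl X w)) = 1"
proof -
  interpret prob_space \<mu> using assms unfolding prob_measure_on_def by blast
  have sets: "cyl X ` blocks X n \<subseteq> sets \<mu>"
    using assms unfolding prob_measure_on_def by auto
  have "disjoint_family_on (cyl X) (blocks X n)"
    unfolding disjoint_family_on_def cyl_def blocks_def by (auto intro: nth_equalityI)
  have cover: "(\<Union>w\<in>blocks X n. cyl X w) = X"
  proof (intro equalityI subsetI)
    fix x assume "x \<in> X"
    then have "map (\<lambda>k. x (int k)) [0..<n] \<in> blocks X n"
      and "x \<in> cyl X (map (\<lambda>k. x (int k)) [0..<n])"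
      using prefix_in_blocks by (auto simp: cyl_def)
    then show "x \<in> (\<Union>w\<in>blocks X n. cyl X w)" by blast
  qed (auto simp: cyl_def)
  have "(\<Sum>w\<in>blocks X n. measure \<mu> (cyl X w)) = measure \<mu> (\<Union>w\<in>blocks X n. cyl X w)"
    using finite_measure_finite_Union[OF finite_blocks sets \<open>disjoint_family_on _ _\<close>] ..
  also have "\<dots> = 1"
    using assms prob_space unfolding cover prob_measure_on_def by simp
  finally show ?thesis .
qed

lemma blocks_subset_language: "1 \<le> n \<Longrightarrow> blocks X n \<subseteq> language X"
  unfolding language_def by auto

lemma length_in_language: "w \<in> language X \<Longrightarrow> 1 \<le> length w"
  unfolding language_def blocks_def by auto

lemma gibbs_imp_entropy_comparable:
  assumes "gibbs (X :: (int \<Rightarrow> 'a::finite) set) \<mu>"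
  shows "entropy_comparable X"
proof -
  obtain c1 c2 :: real where c: "0 < c1" "0 < c2" and pm: "prob_measure_on X \<mu>"
    and bounds: "\<And>w. w \<in> language X \<Longrightarrow>
      c1 \<le> measure \<mu> (cyl X w) * 2 powr (length w * entropy X) \<and>
      measure \<mu> (cyl X w) * 2 powr (length w * entropy X) \<le> c2"
    using assms unfolding gibbs_def by blast
  have "c1 * card (blocks X n) \<le> 2 powr (n * entropy X) \<and>
        2 powr (n * entropy X) \<le> c2 * card (blocks X n)" if n: "1 \<le> n" for n
  proof -
    define p where "p = 2 powr (n * entropy X)"
    have bounds_n: "c1 \<le> measure \<mu> (cyl X w) * p \<and> measure \<mu> (cyl X w) * p \<le> c2"
      if "w \<in> blocks X n" for w
      using bounds blocks_subset_language[OF n] that unfolding p_def by (force simp: blocks_def)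
    have "p = (\<Sum>w\<in>blocks X n. measure \<mu> (cyl X w) * p)"
      by (simp add: sum_distrib_right[symmetric] sum_measure_cyl_blocks[OF pm])
    moreover have "(\<Sum>w\<in>blocks X n. c1) \<le> (\<Sum>w\<in>blocks X n. measure \<mu> (cyl X w) * p)"
      by (rule sum_mono) (use bounds_n in blast)
    moreover have "(\<Sum>w\<in>blocks X n. measure \<mu> (cyl X w) * p) \<le> (\<Sum>w\<in>blocks X n. c2)"
      by (rule sum_mono) (use bounds_n in blast)
    ultimately show ?thesis unfolding p_def by (simp add: mult.commute)
  qed
  then show ?thesis unfolding entropy_comparable_def using c by blast
qed

definition bounded_above_below :: "'b set \<Rightarrow> ('b \<Rightarrow> real) \<Rightarrow> bool" where
  "bounded_above_below W \<psi> \<longleftrightarrow> (\<exists>c1 c2. c1 > 0 \<and> c2 > 0 \<and> (\<forall>w\<in>W. c1 \<le> \<psi> w \<and> \<psi> w \<le> c2))"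

lemma gibbs_iff_bounded_above_below:
  "gibbs X \<mu> \<longleftrightarrow> prob_measure_on X \<mu> \<and>
     bounded_above_below (language X) (\<lambda>w. measure \<mu> (cyl X w) * 2 powr (length w * entropy X))"
  unfolding gibbs_def bounded_above_below_def ..

lemma gibbs_like_iff_bounded_above_below:
  "gibbs_like X \<mu> \<longleftrightarrow> prob_measure_on X \<mu> \<and>
     bounded_above_below (language X) (\<lambda>w. measure \<mu> (cyl X w) * card (blocks X (length w)))"
  unfolding gibbs_like_def bounded_above_below_def ..

lemma bounded_above_below_transfer:
  fixes f g :: "nat \<Rightarrow> real" and \<phi> :: "'b \<Rightarrow> real" and len :: "'b \<Rightarrow> nat"
  assumes "0 < d" "0 < D" and fg: "\<And>n. 1 \<le> n \<Longrightarrow> d * f n \<le> g n \<and> g n \<le> D * f n"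
    and W: "\<And>w. w \<in> W \<Longrightarrow> 1 \<le> len w \<and> 0 \<le> \<phi> w"
    and "bounded_above_below W (\<lambda>w. \<phi> w * f (len w))"
  shows "bounded_above_below W (\<lambda>w. \<phi> w * g (len w))"
proof -
  obtain c1 c2 where c: "c1 > 0" "c2 > 0"
    and bounds: "\<And>w. w \<in> W \<Longrightarrow> c1 \<le> \<phi> w * f (len w) \<and> \<phi> w * f (len w) \<le> c2"
    using assms(5) unfolding bounded_above_below_def by blast
  have "c1 * d \<le> \<phi> w * g (len w) \<and> \<phi> w * g (len w) \<le> c2 * D" if w: "w \<in> W" for w
  proof -
    have "d * (\<phi> w * f (len w)) \<le> \<phi> w * g (len w)" "\<phi> w * g (len w) \<le> D * (\<phi> w * f (len w))"
      using mult_left_mono[OF conjunct1[OF fg], of "len w" "\<phi> w"]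
        mult_left_mono[OF conjunct2[OF fg], of "len w" "\<phi> w"] W[OF w]
      by (simp_all add: mult_ac)
    moreover have "c1 * d \<le> d * (\<phi> w * f (len w))" "D * (\<phi> w * f (len w)) \<le> c2 * D"
      using bounds[OF w] assms(1,2) by (simp_all add: mult.commute)
    ultimately show ?thesis by linarith
  qed
  then show ?thesis unfolding bounded_above_below_def
    using c assms(1,2) by (intro exI[of _ "c1 * d"] exI[of _ "c2 * D"]) auto
qed

lemma gibbs_iff_gibbs_like:
  assumes "entropy_comparable (X :: (int \<Rightarrow> 'a::finite) set)"
  shows "gibbs X \<mu> \<longleftrightarrow> gibbs_like X \<mu>"
proof -
  obtain c1 c2 :: real where c: "0 < c1" "0 < c2" and bounds: "\<And>n. 1 \<le> n \<Longrightarrow>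
      c1 * card (blocks X n) \<le> 2 powr (n * entropy X) \<and>
      2 powr (n * entropy X) \<le> c2 * card (blocks X n)"
    using assms unfolding entropy_comparable_def by auto
  have bounds': "1 / c2 * 2 powr (n * entropy X) \<le> card (blocks X n) \<and>
      card (blocks X n) \<le> 1 / c1 * 2 powr (n * entropy X)" if "1 \<le> n" for n
    using bounds[OF that] c by (simp add: field_simps)
  have W: "\<And>w. w \<in> language X \<Longrightarrow> 1 \<le> length w \<and> 0 \<le> measure \<mu> (cyl X w)"
    using length_in_language by auto
  show ?thesis
    unfolding gibbs_iff_bounded_above_below gibbs_like_iff_bounded_above_below
    using bounded_above_below_transfer[OF _ _ bounds W]
      bounded_above_below_transfer[OF _ _ bounds' W] c by auto
qed

theorem proposition3p13:
  fixes X :: "(int \<Rightarrow> 'a::finite) set"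
  assumes "shift_space X" and "X \<noteq> {}"
  shows "(bounded_supermult X \<longleftrightarrow>
           (\<exists>c1 c2::real. c1 > 0 \<and> c2 > 0 \<and>
              (\<forall>n::nat. n \<ge> 1 \<longrightarrow>
                 c1 \<le> 2 powr (real n * entropy X) / real (card (blocks X n)) \<and>
                 2 powr (real n * entropy X) / real (card (blocks X n)) \<le> c2)))
       \<and> (bounded_supermult X \<longrightarrow>
           (\<forall>\<mu>. prob_measure_on X \<mu> \<longrightarrow> (gibbs X \<mu> \<longleftrightarrow> gibbs_like X \<mu>)))
       \<and> ((\<exists>\<mu>. gibbs X \<mu>) \<longrightarrow>
           bounded_supermult X \<and> (\<forall>\<mu>. gibbs X \<mu> \<longrightarrow> gibbs_like X \<mu>))"
proof -
  have "bounded_supermult X \<longleftrightarrow> entropy_comparable X"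
    using bounded_supermult_imp_entropy_comparable entropy_comparable_imp_bounded_supermult
      assms(2) by blast
  then show ?thesis
    unfolding entropy_comparable_iff_ratio_bounded[OF assms(2), symmetric]
    using gibbs_iff_gibbs_like gibbs_imp_entropy_comparable by blast
qed

end
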